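(* Let $0<\alpha<1$, $T>0$, $M\ge 2$ an integer, $\tau=T/M$, $t_j=j\tau$ ($j=0,1,\dots,M$), and let $u\in\mathcal{C}^3[0,T]$. Then for every $j=1,2,\dots,M-1$, $$\left|\partial_{0t_{j+1}}^{\alpha}u-\Delta_{0t_{j+1}}^{\alpha}u\right|=\mathcal{O}(\tau^{3-\alpha}),$$ i.e. $\left|\partial_{0t_{j+1}}^{\alpha}u-\Delta_{0t_{j+1}}^{\alpha}u\right|\le C\tau^{3-\alpha}$ with a constant $C$ depending only on $\alpha$ and $\max_{[0,T]}|u'''|$ (not on $\tau$ or $j$).
   Context: The Caputo derivative of order $\alpha\in(0,1)$ is $\partial_{0t}^{\alpha}u=\frac{1}{\Gamma(1-\alpha)}\int_0^t u'(\eta)(t-\eta)^{-\alpha}\,d\eta$. Set $u_{t,s}=(u(t_{s+1})-u(t_s))/\tau$, $a_l^{(\alpha)}=(l+1)^{1-\alpha}-l^{1-\alpha}$ and $b_l^{(\alpha)}=\frac{1}{2-\alpha}\left[(l+1)^{2-\alpha}-l^{2-\alpha}\right]-\frac12\left[(l+1)^{1-\alpha}+l^{1-\alpha}\right]$ for $l\ge0$. The L2 formula is $$\Delta_{0t_{j+1}}^{\alpha}u=\frac{\tau^{1-\alpha}}{\Gamma(2-\alpha)}\sum_{s=0}^{j}c_{j-s}^{(\alpha)}u_{t,s},$$ where the coefficients $c_s^{(\alpha)}$ (which depend on $j$) are: for $j=1$: $c_0^{(\alpha)}=a_0^{(\alpha)}+b_0^{(\alpha)}+b_1^{(\alpha)}$,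 $c_1^{(\alpha)}=a_1^{(\alpha)}-b_1^{(\alpha)}-b_0^{(\alpha)}$; for $j=2$: $c_0^{(\alpha)}=a_0^{(\alpha)}+b_0^{(\alpha)}$, $c_1^{(\alpha)}=a_1^{(\alpha)}+b_1^{(\alpha)}+b_2^{(\alpha)}-b_0^{(\alpha)}$, $c_2^{(\alpha)}=a_2^{(\alpha)}-b_2^{(\alpha)}-b_1^{(\alpha)}$; for $j\ge3$: $c_0^{(\alpha)}=a_0^{(\alpha)}+b_0^{(\alpha)}$, $c_s^{(\alpha)}=a_s^{(\alpha)}+b_s^{(\alpha)}-b_{s-1}^{(\alpha)}$ for $1\le s\le j-2$, $c_{j-1}^{(\alpha)}=a_{j-1}^{(\alpha)}+b_{j-1}^{(\alpha)}+b_j^{(\alpha)}-b_{j-2}^{(\alpha)}$, $c_j^{(\alpha)}=a_j^{(\alpha)}-b_j^{(\alpha)}-b_{j-1}^{(\alpha)}$. *)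

theory Defs
  imports "HOL-Analysis.Analysis"
begin

text \<open>Caputo derivative of order alpha at t (u' taken as the derivative of u
  relative to the interval [0,t], i.e. one-sided at the endpoints).\<close>
definition caputo :: "real \<Rightarrow> (real \<Rightarrow> real) \<Rightarrow> real \<Rightarrow> real" where
  "caputo \<alpha> u t = 1 / Gamma (1 - \<alpha>) *
     integral {0..t} (\<lambda>\<eta>. vector_derivative u (at \<eta> within {0..t}) * (t - \<eta>) powr (- \<alpha>))"

definition L2_a :: "real \<Rightarrow> nat \<Rightarrow> real" where
  "L2_a \<alpha> l = (real l + 1) powr (1 - \<alpha>) - real l powr (1 - \<alpha>)"

definition L2_b :: "real \<Rightarrow> nat \<Rightarrow> real" where
  "L2_b \<alpha> l = 1 / (2 - \<alpha>) * ((real l + 1) powr (2 - \<alpha>) - real l powr (2 - \<alpha>))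
              - 1 / 2 * ((real l + 1) powr (1 - \<alpha>) + real l powr (1 - \<alpha>))"

definition L2_c :: "real \<Rightarrow> nat \<Rightarrow> nat \<Rightarrow> real" where
  "L2_c \<alpha> j s =
    (if j = 1 then
       (if s = 0 then L2_a \<alpha> 0 + L2_b \<alpha> 0 + L2_b \<alpha> 1
        else L2_a \<alpha> 1 - L2_b \<alpha> 1 - L2_b \<alpha> 0)
     else if j = 2 then
       (if s = 0 then L2_a \<alpha> 0 + L2_b \<alpha> 0
        else if s = 1 then L2_a \<alpha> 1 + L2_b \<alpha> 1 + L2_b \<alpha> 2 - L2_b \<alpha> 0
        else L2_a \<alpha> 2 - L2_b \<alpha> 2 - L2_b \<alpha> 1)
     else
       (if s = 0 then L2_a \<alpha> 0 + L2_b \<alpha> 0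
        else if s \<le> j - 2 then L2_a \<alpha> s + L2_b \<alpha> s - L2_b \<alpha> (s - 1)
        else if s = j - 1 then L2_a \<alpha> (j - 1) + L2_b \<alpha> (j - 1) + L2_b \<alpha> j - L2_b \<alpha> (j - 2)
        else L2_a \<alpha> j - L2_b \<alpha> j - L2_b \<alpha> (j - 1)))"

definition L2_formula :: "real \<Rightarrow> real \<Rightarrow> (real \<Rightarrow> real) \<Rightarrow> nat \<Rightarrow> real" where
  "L2_formula \<alpha> \<tau> u j = \<tau> powr (1 - \<alpha>) / Gamma (2 - \<alpha>) *
     (\<Sum>s = 0..j. L2_c \<alpha> j (j - s) * ((u (real (s + 1) * \<tau>) - u (real s * \<tau>)) / \<tau>))"

end

theory Submission
  imports Defs
begin

text \<open>
  On the cell [t_k, t_{k+1}] the L2 formula integrates the kernel (t_{j+1} - \<eta>)^{-\<alpha>} exactly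
  against the derivative of the quadratic interpolant of u at t_{k-1}, t_k, t_{k+1} (at t_0, t_1, t_2
  for k = 0). Taylor expansion with |u'''| \<le> K bounds the interpolation error by 3 K \<tau>^3 for u and
  by 4 K \<tau>^2 for u'. On the last cell the kernel has integral \<tau>^{1-\<alpha>}/(1-\<alpha>), which gives
  4 K \<tau>^{3-\<alpha>}/(1-\<alpha>). On every other cell the interpolation error of u vanishes at both ends,
  so integrating by parts moves the derivative onto the kernel, which is increasing there; the
  resulting bounds 3 K \<tau>^3 ((t_{j+1} - t_{k+1})^{-\<alpha>} - (t_{j+1} - t_k)^{-\<alpha>}) telescope to at
  most 3 K \<tau>^{3-\<alpha>}.
\<close>

lemma abs_le_of_vanishing_deriv_bound:
  fixes g g' :: "real \<Rightarrow> real"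
  assumes "g x = 0" and "0 \<le> B"
    and deriv: "\<And>y. y \<in> closed_segment x z \<Longrightarrow> (g has_real_derivative g' y) (at y within closed_segment x z)"
    and bound: "\<And>y. y \<in> closed_segment x z \<Longrightarrow> \<bar>g' y\<bar> \<le> B * \<bar>y - x\<bar> ^ n"
  shows "\<bar>g z\<bar> \<le> B * \<bar>z - x\<bar> ^ Suc n"
proof -
  have "\<bar>g' y\<bar> \<le> B * \<bar>z - x\<bar> ^ n" if "y \<in> closed_segment x z" for y
  proof -
    have "\<bar>y - x\<bar> \<le> \<bar>z - x\<bar>" using segment_bound1[OF that] by simp
    then show ?thesis
      using bound[OF that] \<open>0 \<le> B\<close> by (meson abs_ge_zero mult_left_mono order_trans power_mono)
  qed
  then have "norm (g z - g x) \<le> B * \<bar>z - x\<bar> ^ n * norm (z - x)"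
    by (intro field_differentiable_bound[OF convex_closed_segment deriv]) auto
  then show ?thesis using \<open>g x = 0\<close> by (simp add: mult_ac)
qed

definition quad_interp :: "(real \<Rightarrow> real) \<Rightarrow> real \<Rightarrow> real \<Rightarrow> real \<Rightarrow> real" where
  "quad_interp u x h e = u x + (u (x + h) - u (x - h)) / (2 * h) * (e - x)
     + (u (x + h) - 2 * u x + u (x - h)) / (2 * h\<^sup>2) * (e - x)\<^sup>2"

definition quad_interp_deriv :: "(real \<Rightarrow> real) \<Rightarrow> real \<Rightarrow> real \<Rightarrow> real \<Rightarrow> real" where
  "quad_interp_deriv u x h e = (u (x + h) - u (x - h)) / (2 * h)
     + (u (x + h) - 2 * u x + u (x - h)) / h\<^sup>2 * (e - x)"

lemma has_real_derivative_quad_interp: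
  "(quad_interp u x h has_real_derivative quad_interp_deriv u x h e) (at e within S)"
  unfolding quad_interp_def[abs_def] quad_interp_deriv_def
  by (auto intro!: derivative_eq_intros simp: divide_simps)

lemma quad_interp_nodes:
  assumes "h \<noteq> 0"
  shows "quad_interp u x h (x - h) = u (x - h)" "quad_interp u x h x = u x"
    "quad_interp u x h (x + h) = u (x + h)"
  using assms by (simp_all add: quad_interp_def power2_eq_square field_simps)

lemma quad_interp_deriv_on_cell:
  assumes "h \<noteq> 0" and "a = x - h \<or> a = x"
  shows "quad_interp_deriv u x h e = (u (a + h) - u a) / h
    + (u (x + h) - 2 * u x + u (x - h)) / h\<^sup>2 * (e - a - h / 2)"
  using assms by (auto simp: quad_interp_deriv_def power2_eq_square field_simps)

lemma quad_interp_taylor_eq: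
  fixes u :: "real \<Rightarrow> real" and a b h x e :: real
  defines "R \<equiv> \<lambda>z. u z - u x - a * (z - x) - b * (z - x)\<^sup>2 / 2"
  assumes "h \<noteq> 0"
  shows "quad_interp u x h e = u x + a * (e - x) + b * (e - x)\<^sup>2 / 2
      + (R (x + h) - R (x - h)) / 2 * ((e - x) / h) + (R (x + h) + R (x - h)) / 2 * ((e - x) / h)\<^sup>2"
    and "quad_interp_deriv u x h e = a + b * (e - x)
      + (R (x + h) - R (x - h)) / 2 / h + (R (x + h) + R (x - h)) / h * ((e - x) / h)"
  using assms by (simp_all add: quad_interp_def quad_interp_deriv_def power2_eq_square field_simps)

lemma kernel_power_has_integral:
  fixes p r s t :: real
  assumes p: "0 < p" and rs: "0 \<le> r" "r \<le> s"
  shows "((\<lambda>e. (t - e) powr (p - 1)) has_integral (s powr p - r powr p) / p) {t - s..t - r}"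
proof -
  define F where "F e = - ((t - e) powr p / p)" for e
  have "((\<lambda>e. (t - e) powr (p - 1)) has_integral F (t - r) - F (t - s)) {t - s..t - r}"
  proof (rule fundamental_theorem_of_calculus_interior)
    show "continuous_on {t - s..t - r} F"
      unfolding F_def using p rs
      by (intro continuous_intros continuous_on_powr') auto
    fix e assume "e \<in> {t - s<..<t - r}"
    then have "0 < t - e" using rs by auto
    have "((\<lambda>e. t - e) has_real_derivative -1) (at e)"
      by (auto intro!: derivative_eq_intros)
    from DERIV_minus[OF DERIV_cdivide[OF DERIV_fun_powr[OF this \<open>0 < t - e\<close>, of p], where c = p]]
    have "(F has_real_derivative (t - e) powr (p - 1)) (at e)"
      unfolding F_def[abs_def] using p by simp
    then show "(F has_vector_derivative (t - e) powr (p - 1)) (at e)"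
      by (simp add: has_real_derivative_iff_has_vector_derivative)
  qed (use rs in auto)
  then show ?thesis by (simp add: F_def diff_divide_distrib)
qed

text \<open>The L2 coefficients are the kernel moments of a cell: a_l pairs with the constant and b_l
  with the centred linear part.\<close>

lemma L2_cell_has_integral:
  fixes \<alpha> \<tau> t A B :: real and l :: nat
  assumes \<alpha>: "\<alpha> < 1" and \<tau>: "0 < \<tau>"
  shows "((\<lambda>e. (A + B * (e - (t - (real l + 1) * \<tau>) - \<tau> / 2)) * (t - e) powr (- \<alpha>)) has_integral
      \<tau> powr (1 - \<alpha>) / (1 - \<alpha>) * (L2_a \<alpha> l * A + L2_b \<alpha> l * \<tau> * B))
    {t - (real l + 1) * \<tau>..t - real l * \<tau>}"
proof -
  define X0 where "X0 = real l powr (1 - \<alpha>)"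
  define X1 where "X1 = (real l + 1) powr (1 - \<alpha>)"
  define P where "P = \<tau> powr (1 - \<alpha>)"
  have scale: "(real k * \<tau>) powr q = real k powr q * \<tau> powr q" for k q
    using \<tau> by (simp add: powr_mult)
  have shift: "x powr (2 - \<alpha>) = x * x powr (1 - \<alpha>)" if "0 \<le> x" for x :: real
    using powr_mult_base[OF that, of "1 - \<alpha>"] by simp
  have k0: "((\<lambda>e. (t - e) powr (- \<alpha>)) has_integral P * (X1 - X0) / (1 - \<alpha>))
      {t - (real l + 1) * \<tau>..t - real l * \<tau>}"
    using kernel_power_has_integral[of "1 - \<alpha>" "real l * \<tau>" "(real l + 1) * \<tau>" t] \<alpha> \<tau>
      scale[of "Suc l"] scale[of l]
    by (simp add: X0_def X1_def P_def algebra_simps)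
  have k1: "((\<lambda>e. (t - e) powr (1 - \<alpha>)) has_integral
      \<tau> * P * ((real l + 1) * X1 - real l * X0) / (2 - \<alpha>))
      {t - (real l + 1) * \<tau>..t - real l * \<tau>}"
    using kernel_power_has_integral[of "2 - \<alpha>" "real l * \<tau>" "(real l + 1) * \<tau>" t] \<alpha> \<tau>
      scale[of "Suc l"] scale[of l] shift[of \<tau>] shift[of "real l"] shift[of "real l + 1"]
    by (simp add: X0_def X1_def P_def algebra_simps)
  have combined: "((\<lambda>e. (A + B * (real l + 1 / 2) * \<tau>) * (t - e) powr (- \<alpha>) - B * (t - e) powr (1 - \<alpha>))
      has_integral (A + B * (real l + 1 / 2) * \<tau>) * (P * (X1 - X0) / (1 - \<alpha>))
        - B * (\<tau> * P * ((real l + 1) * X1 - real l * X0) / (2 - \<alpha>)))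
      {t - (real l + 1) * \<tau>..t - real l * \<tau>}"
    by (intro has_integral_diff has_integral_mult_right k0 k1)
  have total: "(A + B * (real l + 1 / 2) * \<tau>) * (P * (X1 - X0) / (1 - \<alpha>))
        - B * (\<tau> * P * ((real l + 1) * X1 - real l * X0) / (2 - \<alpha>))
      = \<tau> powr (1 - \<alpha>) / (1 - \<alpha>) * (L2_a \<alpha> l * A + L2_b \<alpha> l * \<tau> * B)"
    using \<alpha> shift[of "real l"] shift[of "real l + 1"]
    by (simp add: L2_a_def L2_b_def X0_def X1_def P_def field_simps)
  have integrand: "(A + B * (real l + 1 / 2) * \<tau>) * (t - e) powr (- \<alpha>) - B * (t - e) powr (1 - \<alpha>)
      = (A + B * (e - (t - (real l + 1) * \<tau>) - \<tau> / 2)) * (t - e) powr (- \<alpha>)"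
    if "e \<in> {t - (real l + 1) * \<tau>..t - real l * \<tau>}" for e
  proof -
    have "0 \<le> real l * \<tau>" using \<tau> by simp
    then have "0 \<le> t - e" using that by auto
    then have eq: "(t - e) powr (1 - \<alpha>) = (t - e) * (t - e) powr (- \<alpha>)"
      using powr_mult_base[of "t - e" "- \<alpha>"] by simp
    show ?thesis unfolding eq by (simp add: algebra_simps)
  qed
  show ?thesis using has_integral_eq[OF integrand combined] unfolding total .
qed

lemma quad_interp_deriv_kernel_has_integral:
  fixes \<alpha> \<tau> t x a :: real and l :: nat
  assumes \<alpha>: "\<alpha> < 1" and \<tau>: "0 < \<tau>" and a: "a = x - \<tau> \<or> a = x"
    and t: "t - a = (real l + 1) * \<tau>"
  shows "((\<lambda>e. quad_interp_deriv u x \<tau> e * (t - e) powr (- \<alpha>)) has_integral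
      \<tau> powr (1 - \<alpha>) / (1 - \<alpha>) * (L2_a \<alpha> l * ((u (a + \<tau>) - u a) / \<tau>)
        + L2_b \<alpha> l * \<tau> * ((u (x + \<tau>) - 2 * u x + u (x - \<tau>)) / \<tau>\<^sup>2))) {a..a + \<tau>}"
proof -
  have cell: "t - (real l + 1) * \<tau> = a" "t - real l * \<tau> = a + \<tau>"
    using t by (simp_all add: algebra_simps)
  show ?thesis
    using L2_cell_has_integral[OF \<alpha> \<tau>, of "(u (a + \<tau>) - u a) / \<tau>"
        "(u (x + \<tau>) - 2 * u x + u (x - \<tau>)) / \<tau>\<^sup>2" t l]
    unfolding cell quad_interp_deriv_on_cell[OF less_imp_neq[OF \<tau>, symmetric] a] .
qed

lemma L2_c_eq:
  assumes "1 \<le> j" "s \<le> j"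
  shows "L2_c \<alpha> j s = L2_a \<alpha> s + (if s < j then L2_b \<alpha> s else 0)
     - (if 1 \<le> s then L2_b \<alpha> (s - 1) else 0) + (if s + 1 = j then L2_b \<alpha> j else 0)
     - (if s = j then L2_b \<alpha> j else 0)"
  using assms unfolding L2_c_def by (auto simp: numeral_2_eq_2 le_Suc_eq)

text \<open>Summation by parts. Cell k takes its second difference at node max k 1, so the first two
  cells share the nodes t_0, t_1, t_2; this is where the exceptional coefficients c_{j-1} and c_j
  come from.\<close>

lemma sum_L2_c_eq:
  fixes v :: "nat \<Rightarrow> real"
  assumes "1 \<le> j"
  shows "(\<Sum>k = 0..j. L2_c \<alpha> j (j - k) * v k)
    = (\<Sum>k = 0..j. L2_a \<alpha> (j - k) * v k + L2_b \<alpha> (j - k) * (v (max k 1) - v (max k 1 - 1)))"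
proof -
  obtain n where j: "j = Suc n" using assms by (cases j) auto
  have "(\<Sum>k = 0..j. L2_c \<alpha> j (j - k) * v k) = (\<Sum>k = 0..j. L2_a \<alpha> (j - k) * v k
      + (if 1 \<le> k then L2_b \<alpha> (j - k) * v k else 0) - (if k < j then L2_b \<alpha> (j - k - 1) * v k else 0)
      + (if k = 1 then L2_b \<alpha> j * v k else 0) - (if k = 0 then L2_b \<alpha> j * v k else 0))"
    using assms by (intro sum.cong) (auto simp: L2_c_eq algebra_simps)
  also have "\<dots> = (\<Sum>k = 0..j. L2_a \<alpha> (j - k) * v k)
      + (\<Sum>i = 0..n. L2_b \<alpha> (n - i) * v (Suc i)) - (\<Sum>i = 0..n. L2_b \<alpha> (n - i) * v i)
      + L2_b \<alpha> j * (v 1 - v 0)"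
  proof -
    have "(\<Sum>k = 0..j. if 1 \<le> k then L2_b \<alpha> (j - k) * v k else 0)
        = (\<Sum>i = 0..n. L2_b \<alpha> (n - i) * v (Suc i))"
      unfolding j sum.atLeast0_atMost_Suc_shift by simp
    moreover have "(\<Sum>k = 0..j. if k < j then L2_b \<alpha> (j - k - 1) * v k else 0)
        = (\<Sum>i = 0..n. L2_b \<alpha> (n - i) * v i)"
      unfolding j sum.atLeast0_atMost_Suc by simp
    ultimately show ?thesis
      using assms by (simp add: sum.distrib sum_subtractf algebra_simps)
  qed
  also have "\<dots> = (\<Sum>k = 0..j. L2_a \<alpha> (j - k) * v k + L2_b \<alpha> (j - k) * (v (max k 1) - v (max k 1 - 1)))"
  proof -
    have "(\<Sum>k = 0..j. L2_b \<alpha> (j - k) * (v (max k 1) - v (max k 1 - 1)))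
        = L2_b \<alpha> j * (v 1 - v 0) + (\<Sum>i = 0..n. L2_b \<alpha> (n - i) * (v (Suc i) - v i))"
      unfolding j sum.atLeast0_atMost_Suc_shift by simp
    then show ?thesis by (simp add: sum.distrib sum_subtractf algebra_simps)
  qed
  finally show ?thesis .
qed

lemma L2_formula_eq_sum_cells:
  fixes \<alpha> \<tau> :: real and j :: nat
  assumes \<alpha>: "\<alpha> < 1" and \<tau>: "0 < \<tau>" and j: "1 \<le> j"
  shows "L2_formula \<alpha> \<tau> u j = (\<Sum>k = 0..j. integral {real k * \<tau>..real k * \<tau> + \<tau>}
      (\<lambda>e. quad_interp_deriv u (real (max k 1) * \<tau>) \<tau> e * (real (j + 1) * \<tau> - e) powr (- \<alpha>)))
    / Gamma (1 - \<alpha>)"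
proof -
  define v where "v s = (u (real (s + 1) * \<tau>) - u (real s * \<tau>)) / \<tau>" for s
  have cell: "integral {real k * \<tau>..real k * \<tau> + \<tau>}
      (\<lambda>e. quad_interp_deriv u (real (max k 1) * \<tau>) \<tau> e * (real (j + 1) * \<tau> - e) powr (- \<alpha>))
    = \<tau> powr (1 - \<alpha>) / (1 - \<alpha>)
      * (L2_a \<alpha> (j - k) * v k + L2_b \<alpha> (j - k) * (v (max k 1) - v (max k 1 - 1)))"
    if "k \<in> {0..j}" for k
  proof -
    define x where "x = real (max k 1) * \<tau>"
    have a: "real k * \<tau> = x - \<tau> \<or> real k * \<tau> = x" by (cases "k = 0") (simp_all add: x_def)
    have t: "real (j + 1) * \<tau> - real k * \<tau> = (real (j - k) + 1) * \<tau>"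
      using that by (simp add: of_nat_diff algebra_simps)
    have eq_a: "(u (real k * \<tau> + \<tau>) - u (real k * \<tau>)) / \<tau> = v k"
      by (simp add: v_def algebra_simps)
    have eq_b: "L2_b \<alpha> (j - k) * \<tau> * ((u (x + \<tau>) - 2 * u x + u (x - \<tau>)) / \<tau>\<^sup>2)
        = L2_b \<alpha> (j - k) * (v (max k 1) - v (max k 1 - 1))"
      using \<tau> by (simp add: v_def x_def of_nat_diff power2_eq_square field_simps)
    show ?thesis
      using integral_unique[OF quad_interp_deriv_kernel_has_integral[OF \<alpha> \<tau> a t, where u = u],
          unfolded eq_a eq_b]
      unfolding x_def .
  qed
  have Gamma: "Gamma (2 - \<alpha>) = (1 - \<alpha>) * Gamma (1 - \<alpha>)"
    using Gamma_plus1[of "1 - \<alpha>"] \<alpha> by (simp add: nonpos_Ints_def algebra_simps)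
  have "L2_formula \<alpha> \<tau> u j = \<tau> powr (1 - \<alpha>) / Gamma (2 - \<alpha>) * (\<Sum>k = 0..j. L2_c \<alpha> j (j - k) * v k)"
    unfolding L2_formula_def v_def ..
  also have "\<dots> = \<tau> powr (1 - \<alpha>) / Gamma (2 - \<alpha>)
      * (\<Sum>k = 0..j. L2_a \<alpha> (j - k) * v k + L2_b \<alpha> (j - k) * (v (max k 1) - v (max k 1 - 1)))"
    unfolding sum_L2_c_eq[OF j] ..
  also have "\<dots> = (\<Sum>k = 0..j. \<tau> powr (1 - \<alpha>) / (1 - \<alpha>)
      * (L2_a \<alpha> (j - k) * v k + L2_b \<alpha> (j - k) * (v (max k 1) - v (max k 1 - 1)))) / Gamma (1 - \<alpha>)"
    unfolding Gamma by (simp add: sum_distrib_left sum_divide_distrib)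
  also have "\<dots> = (\<Sum>k = 0..j. integral {real k * \<tau>..real k * \<tau> + \<tau>}
      (\<lambda>e. quad_interp_deriv u (real (max k 1) * \<tau>) \<tau> e * (real (j + 1) * \<tau> - e) powr (- \<alpha>)))
    / Gamma (1 - \<alpha>)"
    using cell by simp
  finally show ?thesis .
qed

lemma integrable_continuous_mult_nonneg:
  fixes f w :: "real \<Rightarrow> real"
  assumes f: "continuous_on {a..b} f" and w: "w integrable_on {a..b}"
    and w_nonneg: "\<And>e. e \<in> {a..b} \<Longrightarrow> 0 \<le> w e"
  shows "(\<lambda>e. f e * w e) integrable_on {a..b}"
proof -
  have "(\<lambda>e. f e * w e) absolutely_integrable_on {a..b}"
  proof (rule absolutely_integrable_bounded_measurable_product_real)
    show "f \<in> borel_measurable (lebesgue_on {a..b})"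
      by (rule continuous_imp_measurable_on_sets_lebesgue[OF f]) simp
    show "bounded (f ` {a..b})"
      by (rule compact_imp_bounded[OF compact_continuous_image[OF f compact_Icc]])
    show "w absolutely_integrable_on {a..b}"
      by (rule nonnegative_absolutely_integrable_1[OF w w_nonneg])
  qed simp
  then show ?thesis using set_lebesgue_integral_eq_integral(1) by blast
qed

lemma integrable_continuous_mult_kernel:
  fixes f :: "real \<Rightarrow> real"
  assumes f: "continuous_on {a..b} f" and \<alpha>: "\<alpha> < 1" and ab: "a \<le> b" "b \<le> t"
  shows "(\<lambda>e. f e * (t - e) powr (- \<alpha>)) integrable_on {a..b}"
proof (rule integrable_continuous_mult_nonneg[OF f])
  show "(\<lambda>e. (t - e) powr (- \<alpha>)) integrable_on {a..b}"
    using kernel_power_has_integral[of "1 - \<alpha>" "t - b" "t - a" t] \<alpha> ab by auto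
qed simp

lemma abs_integral_mult_weight_le:
  fixes f w :: "real \<Rightarrow> real"
  assumes f: "continuous_on {a..b} f" and w: "(w has_integral W) {a..b}"
    and w_nonneg: "\<And>e. e \<in> {a..b} \<Longrightarrow> 0 \<le> w e"
    and f_bound: "\<And>e. e \<in> {a..b} \<Longrightarrow> \<bar>f e\<bar> \<le> B"
  shows "\<bar>integral {a..b} (\<lambda>e. f e * w e)\<bar> \<le> B * W"
proof -
  have "norm (integral {a..b} (\<lambda>e. f e * w e)) \<le> integral {a..b} (\<lambda>e. B * w e)"
  proof (rule integral_norm_bound_integral)
    show "(\<lambda>e. f e * w e) integrable_on {a..b}"
      using integrable_continuous_mult_nonneg[OF f has_integral_integrable[OF w] w_nonneg] .
    show "(\<lambda>e. B * w e) integrable_on {a..b}"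
      using has_integral_integrable[OF has_integral_mult_right[OF w]] .
    show "norm (f e * w e) \<le> B * w e" if "e \<in> {a..b}" for e
      using mult_right_mono[OF f_bound w_nonneg, OF that that] w_nonneg[OF that]
      by (simp add: abs_mult)
  qed
  also have "\<dots> = B * W"
    using integral_unique[OF has_integral_mult_right[OF w]] .
  finally show ?thesis by simp
qed

lemma abs_integral_deriv_mult_le:
  fixes g g' w w' :: "real \<Rightarrow> real"
  assumes "a \<le> b" and g_ends: "g a = 0" "g b = 0"
    and g: "\<And>e. e \<in> {a..b} \<Longrightarrow> (g has_real_derivative g' e) (at e within {a..b})"
    and w: "\<And>e. e \<in> {a..b} \<Longrightarrow> (w has_real_derivative w' e) (at e within {a..b})"
    and cont: "continuous_on {a..b} g'" "continuous_on {a..b} w'"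
    and w'_nonneg: "\<And>e. e \<in> {a..b} \<Longrightarrow> 0 \<le> w' e"
    and g_bound: "\<And>e. e \<in> {a..b} \<Longrightarrow> \<bar>g e\<bar> \<le> B"
  shows "\<bar>integral {a..b} (\<lambda>e. g' e * w e)\<bar> \<le> B * (w b - w a)"
proof -
  have w'_int: "(w' has_integral w b - w a) {a..b}"
    using w by (intro fundamental_theorem_of_calculus[OF \<open>a \<le> b\<close>])
      (simp add: has_real_derivative_iff_has_vector_derivative)
  have "((\<lambda>e. g' e * w e + g e * w' e) has_integral g b * w b - g a * w a) {a..b}"
    using DERIV_mult[OF g w] by (intro fundamental_theorem_of_calculus[OF \<open>a \<le> b\<close>])
      (simp add: has_real_derivative_iff_has_vector_derivative mult.commute)
  then have "integral {a..b} (\<lambda>e. g' e * w e) + integral {a..b} (\<lambda>e. g e * w' e) = 0"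
    using g_ends DERIV_continuous_on[OF g] DERIV_continuous_on[OF w] cont
    by (subst integral_add[symmetric]) (auto intro!: integrable_continuous_interval continuous_intros
        simp: integral_unique)
  moreover have "\<bar>integral {a..b} (\<lambda>e. g e * w' e)\<bar> \<le> B * (w b - w a)"
    using abs_integral_mult_weight_le[OF DERIV_continuous_on[OF g] w'_int w'_nonneg g_bound] .
  ultimately show ?thesis by linarith
qed

lemma has_integral_sum_grid_cells:
  fixes f :: "real \<Rightarrow> 'a::banach"
  assumes \<tau>: "0 \<le> \<tau>" and cells: "\<And>k. k < n \<Longrightarrow> f integrable_on {real k * \<tau>..real k * \<tau> + \<tau>}"
  shows "(f has_integral (\<Sum>k<n. integral {real k * \<tau>..real k * \<tau> + \<tau>} f)) {0..real n * \<tau>}"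
  using cells
proof (induction n)
  case 0
  then show ?case using has_integral_refl(2)[of f 0] by simp
next
  case (Suc n)
  have "(f has_integral integral {real n * \<tau>..real n * \<tau> + \<tau>} f) {real n * \<tau>..real n * \<tau> + \<tau>}"
    using Suc.prems by blast
  with Suc have "(f has_integral (\<Sum>k<n. integral {real k * \<tau>..real k * \<tau> + \<tau>} f)
      + integral {real n * \<tau>..real n * \<tau> + \<tau>} f) {0..real n * \<tau> + \<tau>}"
    using \<tau> by (intro has_integral_combine[of 0 "real n * \<tau>" "real n * \<tau> + \<tau>"]) auto
  then show ?case by (simp add: algebra_simps)
qed

lemma sum_L2_cell_bounds_le:
  fixes K \<alpha> \<tau> :: real and j :: nat
  assumes K: "0 \<le> K" and \<alpha>: "\<alpha> < 1" and \<tau>: "0 < \<tau>" and j: "1 \<le> j"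
  shows "(\<Sum>k = 0..j. if k = j then 4 * K * \<tau>\<^sup>2 * (\<tau> powr (1 - \<alpha>) / (1 - \<alpha>))
      else 3 * K * \<tau> ^ 3 * ((real (j + 1) * \<tau> - real (k + 1) * \<tau>) powr (- \<alpha>)
        - (real (j + 1) * \<tau> - real k * \<tau>) powr (- \<alpha>)))
    \<le> K * (3 + 4 / (1 - \<alpha>)) * \<tau> powr (3 - \<alpha>)"
proof -
  define W where "W k = (real (j + 1) * \<tau> - real k * \<tau>) powr (- \<alpha>)" for k
  obtain n where n: "j = Suc n" using j by (cases j) auto
  have "(\<Sum>k = 0..n. W (Suc k) - W k) = W j - W 0" unfolding n by (rule sum_Suc_diff) simp
  moreover have "(\<Sum>k = 0..n. 3 * K * \<tau> ^ 3 * (W (k + 1) - W k))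
      = 3 * K * \<tau> ^ 3 * (\<Sum>k = 0..n. W (Suc k) - W k)"
    by (simp add: sum_distrib_left)
  ultimately have "(\<Sum>k = 0..j. if k = j then 4 * K * \<tau>\<^sup>2 * (\<tau> powr (1 - \<alpha>) / (1 - \<alpha>))
      else 3 * K * \<tau> ^ 3 * (W (k + 1) - W k))
    = 3 * K * \<tau> ^ 3 * (W j - W 0) + 4 * K * \<tau>\<^sup>2 * (\<tau> powr (1 - \<alpha>) / (1 - \<alpha>))"
    by (simp add: n)
  also have "\<dots> \<le> K * (3 + 4 / (1 - \<alpha>)) * \<tau> powr (3 - \<alpha>)"
  proof -
    have "W j = \<tau> powr (- \<alpha>)" by (simp add: W_def algebra_simps)
    moreover have "\<tau> ^ 3 * \<tau> powr (- \<alpha>) = \<tau> powr (3 - \<alpha>)" "\<tau>\<^sup>2 * \<tau> powr (1 - \<alpha>) = \<tau> powr (3 - \<alpha>)"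
      using \<tau> powr_add[of \<tau> 3 "- \<alpha>"] powr_add[of \<tau> 2 "1 - \<alpha>"] by (simp_all add: powr_numeral)
    moreover have "0 \<le> W 0" by (simp add: W_def)
    ultimately show ?thesis
      using K \<tau> by (simp add: algebra_simps mult_left_mono)
  qed
  finally show ?thesis unfolding W_def .
qed

context
  fixes u u1 u2 u3 :: "real \<Rightarrow> real" and T K :: real
  assumes u_deriv: "\<And>x. x \<in> {0..T} \<Longrightarrow> (u has_real_derivative u1 x) (at x within {0..T})"
    and u1_deriv: "\<And>x. x \<in> {0..T} \<Longrightarrow> (u1 has_real_derivative u2 x) (at x within {0..T})"
    and u2_deriv: "\<And>x. x \<in> {0..T} \<Longrightarrow> (u2 has_real_derivative u3 x) (at x within {0..T})"
    and u3_bound: "\<And>x. x \<in> {0..T} \<Longrightarrow> \<bar>u3 x\<bar> \<le> K"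
begin

lemma u3_bound_nonneg: "x \<in> {0..T} \<Longrightarrow> 0 \<le> K"
  using u3_bound[of x] by linarith

lemma segment_in_domain:
  assumes "x \<in> {0..T}" "z \<in> {0..T}" "y \<in> closed_segment x z"
  shows "y \<in> {0..T}"
  using assms by (auto simp: closed_segment_eq_real_ivl split: if_splits)

lemma has_real_derivative_within_segment:
  assumes "(f has_real_derivative f') (at y within {0..T})" "x \<in> {0..T}" "z \<in> {0..T}"
  shows "(f has_real_derivative f') (at y within closed_segment x z)"
  using assms has_field_derivative_subset segment_in_domain by blast

lemma u2_taylor_bound:
  assumes x: "x \<in> {0..T}" and z: "z \<in> {0..T}"
  shows "\<bar>u2 z - u2 x\<bar> \<le> K * \<bar>z - x\<bar>"
proof -
  have "\<bar>(\<lambda>y. u2 y - u2 x) z\<bar> \<le> K * \<bar>z - x\<bar> ^ Suc 0"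
  proof (rule abs_le_of_vanishing_deriv_bound[where g' = u3])
    fix y assume "y \<in> closed_segment x z"
    then have "y \<in> {0..T}" using segment_in_domain x z by blast
    then show "((\<lambda>y. u2 y - u2 x) has_real_derivative u3 y) (at y within closed_segment x z)"
      "\<bar>u3 y\<bar> \<le> K * \<bar>y - x\<bar> ^ 0"
      using has_real_derivative_within_segment[OF u2_deriv x z] u3_bound
      by (auto intro!: derivative_eq_intros)
  qed (use u3_bound_nonneg[OF x] in auto)
  then show ?thesis by simp
qed

lemma u1_taylor_bound:
  assumes x: "x \<in> {0..T}" and z: "z \<in> {0..T}"
  shows "\<bar>u1 z - u1 x - u2 x * (z - x)\<bar> \<le> K * \<bar>z - x\<bar>\<^sup>2"
proof -
  have "\<bar>(\<lambda>y. u1 y - u1 x - u2 x * (y - x)) z\<bar> \<le> K * \<bar>z - x\<bar> ^ Suc 1"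
  proof (rule abs_le_of_vanishing_deriv_bound[where g' = "\<lambda>y. u2 y - u2 x"])
    fix y assume "y \<in> closed_segment x z"
    then have "y \<in> {0..T}" using segment_in_domain x z by blast
    then show "((\<lambda>y. u1 y - u1 x - u2 x * (y - x)) has_real_derivative u2 y - u2 x)
        (at y within closed_segment x z)"
      "\<bar>u2 y - u2 x\<bar> \<le> K * \<bar>y - x\<bar> ^ 1"
      using has_real_derivative_within_segment[OF u1_deriv x z] u2_taylor_bound[OF x]
      by (auto intro!: derivative_eq_intros)
  qed (use u3_bound_nonneg[OF x] in auto)
  then show ?thesis by (simp add: numeral_2_eq_2)
qed

lemma u_taylor_bound:
  assumes x: "x \<in> {0..T}" and z: "z \<in> {0..T}"
  shows "\<bar>u z - u x - u1 x * (z - x) - u2 x * (z - x)\<^sup>2 / 2\<bar> \<le> K * \<bar>z - x\<bar> ^ 3"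
proof -
  have "\<bar>(\<lambda>y. u y - u x - u1 x * (y - x) - u2 x * (y - x)\<^sup>2 / 2) z\<bar> \<le> K * \<bar>z - x\<bar> ^ Suc 2"
  proof (rule abs_le_of_vanishing_deriv_bound[where g' = "\<lambda>y. u1 y - u1 x - u2 x * (y - x)"])
    fix y assume "y \<in> closed_segment x z"
    then have "y \<in> {0..T}" using segment_in_domain x z by blast
    then show "((\<lambda>y. u y - u x - u1 x * (y - x) - u2 x * (y - x)\<^sup>2 / 2) has_real_derivative
        u1 y - u1 x - u2 x * (y - x)) (at y within closed_segment x z)"
      using has_real_derivative_within_segment[OF u_deriv x z]
      by (auto intro!: derivative_eq_intros simp: power2_eq_square field_simps)
    show "\<bar>u1 y - u1 x - u2 x * (y - x)\<bar> \<le> K * \<bar>y - x\<bar>\<^sup>2"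
      using u1_taylor_bound[OF x \<open>y \<in> {0..T}\<close>] .
  qed (use u3_bound_nonneg[OF x] in auto)
  then show ?thesis by (simp add: numeral_3_eq_3)
qed

lemma quad_interp_error:
  assumes h: "0 < h" and x: "0 \<le> x - h" "x + h \<le> T" and e: "e \<in> {x - h..x + h}"
  shows "\<bar>u e - quad_interp u x h e\<bar> \<le> 3 * K * h ^ 3"
    and "\<bar>u1 e - quad_interp_deriv u x h e\<bar> \<le> 4 * K * h\<^sup>2"
proof -
  define R where "R z = u z - u x - u1 x * (z - x) - u2 x * (z - x)\<^sup>2 / 2" for z
  define p where "p = R (x + h)"
  define m where "m = R (x - h)"
  define s where "s = (e - x) / h"
  have in_dom: "x \<in> {0..T}" "x + h \<in> {0..T}" "x - h \<in> {0..T}" "e \<in> {0..T}"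
    using h x e by auto
  have "\<bar>e - x\<bar> \<le> h" using e by auto
  then have "\<bar>s\<bar> \<le> 1" using h by (simp add: s_def abs_divide)
  then have shrink: "\<bar>c * s\<bar> \<le> \<bar>c\<bar>" "\<bar>c * s\<^sup>2\<bar> \<le> \<bar>c\<bar>" for c
    by (auto simp: abs_mult intro!: mult_left_le abs_square_le_1[THEN iffD2])
  have "\<bar>e - x\<bar> ^ 3 \<le> h ^ 3" "\<bar>e - x\<bar>\<^sup>2 \<le> h\<^sup>2"
    using \<open>\<bar>e - x\<bar> \<le> h\<close> by (rule power_mono[OF _ abs_ge_zero])+
  then have Re: "\<bar>R e\<bar> \<le> K * h ^ 3"
    and R1e: "\<bar>u1 e - u1 x - u2 x * (e - x)\<bar> \<le> K * h\<^sup>2"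
    using u_taylor_bound[OF in_dom(1,4)] u1_taylor_bound[OF in_dom(1,4)]
      u3_bound_nonneg[OF in_dom(1)]
    unfolding R_def by (meson mult_left_mono order_trans)+
  have p: "\<bar>p\<bar> \<le> K * h ^ 3" and m: "\<bar>m\<bar> \<le> K * h ^ 3"
    using u_taylor_bound[OF in_dom(1,2)] u_taylor_bound[OF in_dom(1,3)] h
    unfolding p_def m_def R_def by simp_all
  have div_h: "\<bar>c / h\<bar> \<le> C * h\<^sup>2" if "\<bar>c\<bar> \<le> C * h ^ 3" for c C
    using that h by (simp add: abs_divide divide_le_eq power2_eq_square power3_eq_cube mult_ac)
  have abs_diff3_le: "\<bar>a - b - c\<bar> \<le> \<bar>a\<bar> + \<bar>b\<bar> + \<bar>c\<bar>" for a b c :: real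
    by arith
  have "\<bar>(p - m) / 2 * s\<bar> \<le> K * h ^ 3" "\<bar>(p + m) / 2 * s\<^sup>2\<bar> \<le> K * h ^ 3"
    using p m by (intro order_trans[OF shrink(1)] order_trans[OF shrink(2)]; auto simp: abs_le_iff)+
  moreover have "u e - quad_interp u x h e = R e - (p - m) / 2 * s - (p + m) / 2 * s\<^sup>2"
    using quad_interp_taylor_eq(1)[where a = "u1 x" and b = "u2 x" and h = h] h by (simp add: R_def p_def m_def s_def)
  ultimately show "\<bar>u e - quad_interp u x h e\<bar> \<le> 3 * K * h ^ 3"
    using Re abs_diff3_le[of "R e" "(p - m) / 2 * s" "(p + m) / 2 * s\<^sup>2"] by linarith
  have "\<bar>(p - m) / 2 / h\<bar> \<le> K * h\<^sup>2" "\<bar>(p + m) / h * s\<bar> \<le> 2 * K * h\<^sup>2"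
    using p m by (intro div_h order_trans[OF shrink(1)]; auto simp: abs_le_iff)+
  moreover have "u1 e - quad_interp_deriv u x h e
      = (u1 e - u1 x - u2 x * (e - x)) - (p - m) / 2 / h - (p + m) / h * s"
    using quad_interp_taylor_eq(2)[where a = "u1 x" and b = "u2 x" and h = h] h by (simp add: R_def p_def m_def s_def)
  ultimately show "\<bar>u1 e - quad_interp_deriv u x h e\<bar> \<le> 4 * K * h\<^sup>2"
    using R1e abs_diff3_le[of "u1 e - u1 x - u2 x * (e - x)" "(p - m) / 2 / h" "(p + m) / h * s"]
    by linarith
qed

lemma continuous_on_u1: "continuous_on {0..T} u1"
  using DERIV_continuous_on[OF u1_deriv] .

lemma last_cell_error:
  assumes \<alpha>: "\<alpha> < 1" and \<tau>: "0 < \<tau>" and x: "0 \<le> x - \<tau>" "x + \<tau> \<le> T"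
    and a: "a = x - \<tau> \<or> a = x"
  shows "\<bar>integral {a..a + \<tau>} (\<lambda>e. (u1 e - quad_interp_deriv u x \<tau> e) * (a + \<tau> - e) powr (- \<alpha>))\<bar>
    \<le> 4 * K * \<tau>\<^sup>2 * (\<tau> powr (1 - \<alpha>) / (1 - \<alpha>))"
proof (rule abs_integral_mult_weight_le)
  have "{a..a + \<tau>} \<subseteq> {0..T}" using a x by auto
  then show "continuous_on {a..a + \<tau>} (\<lambda>e. u1 e - quad_interp_deriv u x \<tau> e)"
    unfolding quad_interp_deriv_def
    by (intro continuous_intros continuous_on_subset[OF continuous_on_u1])
  show "((\<lambda>e. (a + \<tau> - e) powr (- \<alpha>)) has_integral \<tau> powr (1 - \<alpha>) / (1 - \<alpha>)) {a..a + \<tau>}"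
    using kernel_power_has_integral[of "1 - \<alpha>" 0 \<tau> "a + \<tau>"] \<alpha> \<tau> by simp
  show "\<bar>u1 e - quad_interp_deriv u x \<tau> e\<bar> \<le> 4 * K * \<tau>\<^sup>2" if "e \<in> {a..a + \<tau>}" for e
    using quad_interp_error(2)[OF \<tau> x] that a by auto
qed simp

lemma interior_cell_error:
  assumes \<alpha>: "0 < \<alpha>" and \<tau>: "0 < \<tau>" and x: "0 \<le> x - \<tau>" "x + \<tau> \<le> T"
    and a: "a = x - \<tau> \<or> a = x" and t: "a + \<tau> < t"
  shows "\<bar>integral {a..a + \<tau>} (\<lambda>e. (u1 e - quad_interp_deriv u x \<tau> e) * (t - e) powr (- \<alpha>))\<bar>
    \<le> 3 * K * \<tau> ^ 3 * ((t - (a + \<tau>)) powr (- \<alpha>) - (t - a) powr (- \<alpha>))"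
proof (rule abs_integral_deriv_mult_le)
  have sub: "{a..a + \<tau>} \<subseteq> {0..T}" using a x by auto
  have pos: "0 < t - e" if "e \<in> {a..a + \<tau>}" for e using that t by auto
  show "u a - quad_interp u x \<tau> a = 0" "u (a + \<tau>) - quad_interp u x \<tau> (a + \<tau>) = 0"
    using a quad_interp_nodes[of \<tau> u x] \<tau> by auto
  show "((\<lambda>e. u e - quad_interp u x \<tau> e) has_real_derivative u1 e - quad_interp_deriv u x \<tau> e)
      (at e within {a..a + \<tau>})" if "e \<in> {a..a + \<tau>}" for e
    using has_field_derivative_subset[OF u_deriv sub] that sub
    by (auto intro!: derivative_eq_intros has_real_derivative_quad_interp)
  show "((\<lambda>e. (t - e) powr (- \<alpha>)) has_real_derivative \<alpha> * (t - e) powr (- \<alpha> - 1))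
      (at e within {a..a + \<tau>})" if "e \<in> {a..a + \<tau>}" for e
    using pos[OF that] by (auto intro!: derivative_eq_intros)
  show "continuous_on {a..a + \<tau>} (\<lambda>e. u1 e - quad_interp_deriv u x \<tau> e)"
    unfolding quad_interp_deriv_def
    by (intro continuous_intros continuous_on_subset[OF continuous_on_u1 sub])
  show "continuous_on {a..a + \<tau>} (\<lambda>e. \<alpha> * (t - e) powr (- \<alpha> - 1))"
    using t by (intro continuous_intros) auto
  show "0 \<le> \<alpha> * (t - e) powr (- \<alpha> - 1)" for e using \<alpha> by simp
  show "\<bar>u e - quad_interp u x \<tau> e\<bar> \<le> 3 * K * \<tau> ^ 3" if "e \<in> {a..a + \<tau>}" for e
    using quad_interp_error(1)[OF \<tau> x] that a by auto
qed (use \<tau> in simp)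

lemma caputo_eq_sum_cells:
  assumes \<alpha>: "\<alpha> < 1" and \<tau>: "0 < \<tau>" and T: "real (j + 1) * \<tau> \<le> T"
  shows "caputo \<alpha> u (real (j + 1) * \<tau>) = (\<Sum>k = 0..j. integral {real k * \<tau>..real k * \<tau> + \<tau>}
      (\<lambda>e. u1 e * (real (j + 1) * \<tau> - e) powr (- \<alpha>))) / Gamma (1 - \<alpha>)"
proof -
  define t where "t = real (j + 1) * \<tau>"
  have "integral {0..t} (\<lambda>e. vector_derivative u (at e within {0..t}) * (t - e) powr (- \<alpha>))
      = integral {0..t} (\<lambda>e. u1 e * (t - e) powr (- \<alpha>))"
  proof (rule integral_cong)
    fix e assume e: "e \<in> {0..t}"
    have "(u has_real_derivative u1 e) (at e within {0..t})"
      using has_field_derivative_subset[OF u_deriv] e T by (auto simp: t_def)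
    then have "vector_derivative u (at e within {0..t}) = u1 e"
      using vector_derivative_within_closed_interval[of 0 t e] e \<tau>
      by (simp add: t_def has_real_derivative_iff_has_vector_derivative)
    then show "vector_derivative u (at e within {0..t}) * (t - e) powr (- \<alpha>)
        = u1 e * (t - e) powr (- \<alpha>)" by simp
  qed
  also have "\<dots> = (\<Sum>k<j + 1. integral {real k * \<tau>..real k * \<tau> + \<tau>} (\<lambda>e. u1 e * (t - e) powr (- \<alpha>)))"
  proof (rule integral_unique[OF has_integral_sum_grid_cells[of \<tau> "j + 1", folded t_def]])
    fix k assume "k < j + 1"
    then have "real k * \<tau> + \<tau> \<le> t" using \<tau> by (simp add: t_def algebra_simps)
    moreover have "continuous_on {real k * \<tau>..real k * \<tau> + \<tau>} u1"
      using continuous_on_subset[OF continuous_on_u1] \<open>real k * \<tau> + \<tau> \<le> t\<close> \<tau> T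
      by (auto simp: t_def)
    ultimately show "(\<lambda>e. u1 e * (t - e) powr (- \<alpha>)) integrable_on {real k * \<tau>..real k * \<tau> + \<tau>}"
      using integrable_continuous_mult_kernel[OF _ \<alpha>] \<tau> by simp
  qed (use \<tau> in simp)
  finally show ?thesis
    unfolding caputo_def t_def by (simp add: atLeast0AtMost lessThan_Suc_atMost)
qed

lemma grid_cell_error:
  assumes \<alpha>: "0 < \<alpha>" "\<alpha> < 1" and \<tau>: "0 < \<tau>" and k: "k \<le> j" and j: "1 \<le> j"
    and T: "real (j + 1) * \<tau> \<le> T"
  shows "\<bar>integral {real k * \<tau>..real k * \<tau> + \<tau>} (\<lambda>e. (u1 e - quad_interp_deriv u (real (max k 1) * \<tau>) \<tau> e)
      * (real (j + 1) * \<tau> - e) powr (- \<alpha>))\<bar>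
    \<le> (if k = j then 4 * K * \<tau>\<^sup>2 * (\<tau> powr (1 - \<alpha>) / (1 - \<alpha>))
       else 3 * K * \<tau> ^ 3 * ((real (j + 1) * \<tau> - real (k + 1) * \<tau>) powr (- \<alpha>)
         - (real (j + 1) * \<tau> - real k * \<tau>) powr (- \<alpha>)))"
proof -
  define x where "x = real (max k 1) * \<tau>"
  have x: "0 \<le> x - \<tau>" "x + \<tau> \<le> T"
  proof -
    have "x + \<tau> = real (max k 1 + 1) * \<tau>" by (simp add: x_def algebra_simps)
    also have "\<dots> \<le> real (j + 1) * \<tau>" using k j \<tau> by (intro mult_right_mono) auto
    finally show "x + \<tau> \<le> T" using T by simp
  qed (use \<tau> in \<open>simp add: x_def algebra_simps\<close>)
  have a: "real k * \<tau> = x - \<tau> \<or> real k * \<tau> = x" by (cases "k = 0") (simp_all add: x_def)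
  show ?thesis
  proof (cases "k = j")
    case True
    then have "real (j + 1) * \<tau> = real k * \<tau> + \<tau>" by (simp add: algebra_simps)
    then show ?thesis
      using last_cell_error[OF \<alpha>(2) \<tau> x a] True by (simp add: x_def)
  next
    case False
    then have "real k * \<tau> + \<tau> < real (j + 1) * \<tau>" using k \<tau> by (simp add: algebra_simps)
    moreover have "real (k + 1) * \<tau> = real k * \<tau> + \<tau>" by (simp add: algebra_simps)
    ultimately show ?thesis
      using interior_cell_error[OF \<alpha>(1) \<tau> x a] False by (simp add: x_def)
  qed
qed

lemma caputo_minus_L2_formula_eq:
  assumes \<alpha>: "\<alpha> < 1" and \<tau>: "0 < \<tau>" and j: "1 \<le> j" and T: "real (j + 1) * \<tau> \<le> T"
  shows "caputo \<alpha> u (real (j + 1) * \<tau>) - L2_formula \<alpha> \<tau> u j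
    = (\<Sum>k = 0..j. integral {real k * \<tau>..real k * \<tau> + \<tau>}
        (\<lambda>e. (u1 e - quad_interp_deriv u (real (max k 1) * \<tau>) \<tau> e) * (real (j + 1) * \<tau> - e) powr (- \<alpha>)))
      / Gamma (1 - \<alpha>)"
proof -
  define t where "t = real (j + 1) * \<tau>"
  define Q where "Q k = quad_interp_deriv u (real (max k 1) * \<tau>) \<tau>" for k
  have "integral {real k * \<tau>..real k * \<tau> + \<tau>} (\<lambda>e. (u1 e - Q k e) * (t - e) powr (- \<alpha>))
      = integral {real k * \<tau>..real k * \<tau> + \<tau>} (\<lambda>e. u1 e * (t - e) powr (- \<alpha>))
        - integral {real k * \<tau>..real k * \<tau> + \<tau>} (\<lambda>e. Q k e * (t - e) powr (- \<alpha>))"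
    if "k \<in> {0..j}" for k
  proof -
    have "real k * \<tau> + \<tau> \<le> t" using that \<tau> by (simp add: t_def algebra_simps)
    moreover have "0 \<le> real k * \<tau>" using \<tau> by simp
    ultimately have cell: "{real k * \<tau>..real k * \<tau> + \<tau>} \<subseteq> {0..T}" "real k * \<tau> + \<tau> \<le> t"
      using T by (auto simp: t_def)
    have "continuous_on {real k * \<tau>..real k * \<tau> + \<tau>} u1"
      "continuous_on {real k * \<tau>..real k * \<tau> + \<tau>} (Q k)"
      using continuous_on_subset[OF continuous_on_u1 cell(1)] \<tau>
      by (auto simp: Q_def quad_interp_deriv_def intro!: continuous_intros)
    then show ?thesis
      unfolding left_diff_distrib using cell(2) \<tau>
      by (intro integral_diff integrable_continuous_mult_kernel[OF _ \<alpha>]) auto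
  qed
  then have "(\<Sum>k = 0..j. integral {real k * \<tau>..real k * \<tau> + \<tau>} (\<lambda>e. (u1 e - Q k e) * (t - e) powr (- \<alpha>)))
      = (\<Sum>k = 0..j. integral {real k * \<tau>..real k * \<tau> + \<tau>} (\<lambda>e. u1 e * (t - e) powr (- \<alpha>)))
        - (\<Sum>k = 0..j. integral {real k * \<tau>..real k * \<tau> + \<tau>} (\<lambda>e. Q k e * (t - e) powr (- \<alpha>)))"
    by (simp add: sum_subtractf[symmetric])
  then show ?thesis
    unfolding t_def[symmetric] caputo_eq_sum_cells[OF \<alpha> \<tau> T, folded t_def]
      L2_formula_eq_sum_cells[OF \<alpha> \<tau> j, folded t_def]
    by (simp add: Q_def diff_divide_distrib[symmetric])
qed

lemma L2_error_bound:
  assumes \<alpha>: "0 < \<alpha>" "\<alpha> < 1" and \<tau>: "0 < \<tau>" and j: "1 \<le> j"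
    and T: "real (j + 1) * \<tau> \<le> T"
  shows "\<bar>caputo \<alpha> u (real (j + 1) * \<tau>) - L2_formula \<alpha> \<tau> u j\<bar>
    \<le> K * (3 + 4 / (1 - \<alpha>)) / Gamma (1 - \<alpha>) * \<tau> powr (3 - \<alpha>)"
proof -
  have "0 \<le> real (j + 1) * \<tau>" using \<tau> by simp
  then have K: "0 \<le> K" using u3_bound_nonneg[of 0] T by simp
  have \<Gamma>: "0 < Gamma (1 - \<alpha>)" using \<alpha> by simp
  have "\<bar>\<Sum>k = 0..j. integral {real k * \<tau>..real k * \<tau> + \<tau>}
      (\<lambda>e. (u1 e - quad_interp_deriv u (real (max k 1) * \<tau>) \<tau> e) * (real (j + 1) * \<tau> - e) powr (- \<alpha>))\<bar>
    \<le> (\<Sum>k = 0..j. if k = j then 4 * K * \<tau>\<^sup>2 * (\<tau> powr (1 - \<alpha>) / (1 - \<alpha>))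
      else 3 * K * \<tau> ^ 3 * ((real (j + 1) * \<tau> - real (k + 1) * \<tau>) powr (- \<alpha>)
        - (real (j + 1) * \<tau> - real k * \<tau>) powr (- \<alpha>)))"
    using grid_cell_error[OF \<alpha> \<tau> _ j T] by (intro order_trans[OF sum_abs] sum_mono) simp
  also have "\<dots> \<le> K * (3 + 4 / (1 - \<alpha>)) * \<tau> powr (3 - \<alpha>)"
    using sum_L2_cell_bounds_le[OF K \<alpha>(2) \<tau> j] .
  finally show ?thesis
    unfolding caputo_minus_L2_formula_eq[OF \<alpha>(2) \<tau> j T] using \<Gamma>
    by (simp add: abs_divide divide_right_mono)
qed

end

theorem lemma1:
  fixes \<alpha> K :: real
  assumes "0 < \<alpha>" and "\<alpha> < 1"
  shows "\<exists>C. \<forall>(T::real) (M::nat) (u::real \<Rightarrow> real) u1 u2 u3 (j::nat).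
     T > 0 \<longrightarrow> M \<ge> 2 \<longrightarrow>
     (\<forall>x\<in>{0..T}. (u has_real_derivative u1 x) (at x within {0..T}) \<and>
                  (u1 has_real_derivative u2 x) (at x within {0..T}) \<and>
                  (u2 has_real_derivative u3 x) (at x within {0..T})) \<longrightarrow>
     continuous_on {0..T} u3 \<longrightarrow>
     (\<forall>x\<in>{0..T}. \<bar>u3 x\<bar> \<le> K) \<longrightarrow>
     1 \<le> j \<longrightarrow> j \<le> M - 1 \<longrightarrow>
     \<bar>caputo \<alpha> u (real (j + 1) * (T / real M)) - L2_formula \<alpha> (T / real M) u j\<bar>
        \<le> C * (T / real M) powr (3 - \<alpha>)"
proof (intro exI allI impI)
  fix T :: real and M :: nat and u u1 u2 u3 :: "real \<Rightarrow> real" and j :: nat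
  assume T: "T > 0" and M: "M \<ge> 2"
    and deriv: "\<forall>x\<in>{0..T}. (u has_real_derivative u1 x) (at x within {0..T}) \<and>
                  (u1 has_real_derivative u2 x) (at x within {0..T}) \<and>
                  (u2 has_real_derivative u3 x) (at x within {0..T})"
    and bound: "\<forall>x\<in>{0..T}. \<bar>u3 x\<bar> \<le> K" and j: "1 \<le> j" "j \<le> M - 1"
  have \<tau>: "0 < T / real M" using T M by simp
  have "real (j + 1) * (T / real M) \<le> real M * (T / real M)"
    using j M \<tau> by (intro mult_right_mono) auto
  then have "real (j + 1) * (T / real M) \<le> T" using M by simp
  then show "\<bar>caputo \<alpha> u (real (j + 1) * (T / real M)) - L2_formula \<alpha> (T / real M) u j\<bar>
      \<le> K * (3 + 4 / (1 - \<alpha>)) / Gamma (1 - \<alpha>) * (T / real M) powr (3 - \<alpha>)"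
    using L2_error_bound[of T u u1 u2 u3 K \<alpha> "T / real M" j] deriv bound assms \<tau> j by blast
qed

end
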